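(* Let $K$ be a field of characteristic $0$, let $S=K[x_1,\ldots,x_n]$ be graded by $\deg x_i=a_i>0$, and let $I\subsetneq S$ be a graded ideal which is strongly Golod, i.e. $\partial(I)^2\subseteq I$, where $\partial(I)$ is the ideal generated by all $\partial f/\partial x_i$ with $f\in I$, $1\le i\le n$. Then for each minimal prime ideal $P$ of $I$, the (uniquely determined) $P$-primary component $Q$ of $I$ is strongly Golod, i.e. $\partial(Q)^2\subseteq Q$. *)

theory Defs
  imports Main "HOL-Library.Poly_Mapping"
begin

text \<open>Polynomial ring K[x_v | v in 'v] (with 'v finite) represented as
  finitely supported maps from monomials (exponent vectors 'v =>0 nat) to coefficients.\<close>

type_synonym ('v, 'a) mpoly = "('v \<Rightarrow>\<^sub>0 nat) \<Rightarrow>\<^sub>0 'a"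

definition is_ideal :: "'r::comm_ring_1 set \<Rightarrow> bool" where
  "is_ideal I \<longleftrightarrow> 0 \<in> I \<and> (\<forall>f\<in>I. \<forall>g\<in>I. f + g \<in> I) \<and> (\<forall>f\<in>I. \<forall>r. r * f \<in> I)"

definition ideal_gen :: "'r::comm_ring_1 set \<Rightarrow> 'r set" where
  "ideal_gen G = \<Inter>{I. is_ideal I \<and> G \<subseteq> I}"

definition ideal_prod :: "'r::comm_ring_1 set \<Rightarrow> 'r set \<Rightarrow> 'r set" where
  "ideal_prod I J = ideal_gen {f * g | f g. f \<in> I \<and> g \<in> J}"

definition prime_ideal :: "'r::comm_ring_1 set \<Rightarrow> bool" where
  "prime_ideal P \<longleftrightarrow> is_ideal P \<and> P \<noteq> UNIV \<and> (\<forall>a b. a * b \<in> P \<longrightarrow> a \<in> P \<or> b \<in> P)"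

definition primary_ideal :: "'r::comm_ring_1 set \<Rightarrow> bool" where
  "primary_ideal Q \<longleftrightarrow> is_ideal Q \<and> Q \<noteq> UNIV \<and>
     (\<forall>a b. a * b \<in> Q \<longrightarrow> a \<in> Q \<or> (\<exists>n. b ^ n \<in> Q))"

definition ideal_radical :: "'r::comm_ring_1 set \<Rightarrow> 'r set" where
  "ideal_radical I = {f. \<exists>n. f ^ n \<in> I}"

definition minimal_prime :: "'r::comm_ring_1 set \<Rightarrow> 'r set \<Rightarrow> bool" where
  "minimal_prime P I \<longleftrightarrow> prime_ideal P \<and> I \<subseteq> P \<and>
     (\<forall>P'. prime_ideal P' \<and> I \<subseteq> P' \<and> P' \<subseteq> P \<longrightarrow> P' = P)"

definition minimal_primary_decomposition :: "'r::comm_ring_1 set set \<Rightarrow> 'r set \<Rightarrow> bool" where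
  "minimal_primary_decomposition \<Q> I \<longleftrightarrow> finite \<Q> \<and> \<Q> \<noteq> {} \<and>
     (\<forall>Q\<in>\<Q>. primary_ideal Q) \<and> \<Inter>\<Q> = I \<and>
     (\<forall>Q1\<in>\<Q>. \<forall>Q2\<in>\<Q>. ideal_radical Q1 = ideal_radical Q2 \<longrightarrow> Q1 = Q2) \<and>
     (\<forall>Q\<in>\<Q>. \<Inter>(\<Q> - {Q}) \<noteq> I)"

definition pdiff :: "'v \<Rightarrow> ('v, 'a::comm_ring_1) mpoly \<Rightarrow> ('v, 'a) mpoly" where
  "pdiff i f = (\<Sum>m\<in>Poly_Mapping.keys f. Poly_Mapping.single (m - Poly_Mapping.single i (1::nat))
                   (of_nat (Poly_Mapping.lookup m i) * Poly_Mapping.lookup f m))"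

definition deriv_ideal :: "('v, 'a::comm_ring_1) mpoly set \<Rightarrow> ('v, 'a) mpoly set" where
  "deriv_ideal I = ideal_gen {pdiff i f | i f. f \<in> I}"

definition strongly_golod :: "('v, 'a::comm_ring_1) mpoly set \<Rightarrow> bool" where
  "strongly_golod I \<longleftrightarrow> ideal_prod (deriv_ideal I) (deriv_ideal I) \<subseteq> I"

definition wdeg :: "('v::finite \<Rightarrow> nat) \<Rightarrow> ('v \<Rightarrow>\<^sub>0 nat) \<Rightarrow> nat" where
  "wdeg a m = (\<Sum>v\<in>UNIV. a v * Poly_Mapping.lookup m v)"

definition hom_component :: "('v::finite \<Rightarrow> nat) \<Rightarrow> nat \<Rightarrow> ('v, 'a::comm_ring_1) mpoly \<Rightarrow> ('v, 'a) mpoly" where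
  "hom_component a d f = (\<Sum>m\<in>{m\<in>Poly_Mapping.keys f. wdeg a m = d}. Poly_Mapping.single m (Poly_Mapping.lookup f m))"

definition graded_ideal :: "('v::finite \<Rightarrow> nat) \<Rightarrow> ('v, 'a::comm_ring_1) mpoly set \<Rightarrow> bool" where
  "graded_ideal a I \<longleftrightarrow> is_ideal I \<and> (\<forall>f\<in>I. \<forall>d. hom_component a d f \<in> I)"

end

theory Submission
  imports Defs
begin

text \<open>Let \<open>Q\<close> be the \<open>P\<close>-primary component. Every other component of the irredundant
  decomposition is not contained in \<open>P\<close> (otherwise its radical would be a prime between \<open>I\<close>
  and the minimal prime \<open>P\<close>), so the product \<open>s\<close> of elements chosen outside \<open>P\<close> satisfies
  \<open>s \<notin> P\<close> and \<open>s Q \<subseteq> I\<close>. For \<open>q, h \<in> Q\<close> the Leibniz rule gives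
  \<open>s\<^sup>2 \<partial>\<^sub>i q \<partial>\<^sub>j h \<equiv> \<partial>\<^sub>i(s q) \<partial>\<^sub>j(s h) (mod Q)\<close>, and the right-hand side lies in
  \<open>\<partial>(I)\<^sup>2 \<subseteq> I \<subseteq> Q\<close>. Since \<open>Q\<close> is primary and \<open>s\<^sup>2 \<notin> P = \<surd>Q\<close>, it follows that
  \<open>\<partial>\<^sub>i q \<partial>\<^sub>j h \<in> Q\<close>, which gives \<open>\<partial>(Q)\<^sup>2 \<subseteq> Q\<close>.\<close>

lemma ideal_gen_least: "is_ideal J \<Longrightarrow> G \<subseteq> J \<Longrightarrow> ideal_gen G \<subseteq> J"
  unfolding ideal_gen_def by blast

lemma ideal_gen_subset: "G \<subseteq> ideal_gen G"
  unfolding ideal_gen_def by blast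

lemma ideal_zero: "is_ideal I \<Longrightarrow> 0 \<in> I"
  unfolding is_ideal_def by blast

lemma ideal_add: "is_ideal I \<Longrightarrow> f \<in> I \<Longrightarrow> g \<in> I \<Longrightarrow> f + g \<in> I"
  unfolding is_ideal_def by blast

lemma ideal_mult_left: "is_ideal I \<Longrightarrow> f \<in> I \<Longrightarrow> r * f \<in> I"
  unfolding is_ideal_def by blast

lemma ideal_mult_right: "is_ideal I \<Longrightarrow> f \<in> I \<Longrightarrow> f * r \<in> I"
  using ideal_mult_left[of I f r] by (simp add: mult.commute)

lemma ideal_diff: "is_ideal I \<Longrightarrow> f \<in> I \<Longrightarrow> g \<in> I \<Longrightarrow> f - g \<in> I"
  using ideal_add[of I f "- 1 * g"] ideal_mult_left[of I g "- 1"] by simp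

lemma ideal_sum: "is_ideal I \<Longrightarrow> (\<And>x. x \<in> A \<Longrightarrow> f x \<in> I) \<Longrightarrow> sum f A \<in> I"
  by (induction A rule: infinite_finite_induct) (auto simp: is_ideal_def)

lemma ideal_power_mono: "is_ideal I \<Longrightarrow> x ^ m \<in> I \<Longrightarrow> m \<le> k \<Longrightarrow> x ^ k \<in> I"
  using ideal_mult_left[of I "x ^ m" "x ^ (k - m)"] by (simp add: power_add[symmetric])

lemma ideal_prod_mem: "f \<in> I \<Longrightarrow> g \<in> J \<Longrightarrow> f * g \<in> ideal_prod I J"
  unfolding ideal_prod_def by (rule subsetD[OF ideal_gen_subset]) blast

definition ideal_quotient :: "'r::comm_ring_1 set \<Rightarrow> 'r set \<Rightarrow> 'r set" where
  "ideal_quotient K J = {x. \<forall>y\<in>J. x * y \<in> K}"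

lemma is_ideal_ideal_quotient: "is_ideal K \<Longrightarrow> is_ideal (ideal_quotient K J)"
  unfolding is_ideal_def ideal_quotient_def by (simp add: distrib_right mult.assoc)

lemma ideal_prod_ideal_gen_subset:
  assumes K: "is_ideal K" and AB: "\<And>a b. a \<in> A \<Longrightarrow> b \<in> B \<Longrightarrow> a * b \<in> K"
  shows "ideal_prod (ideal_gen A) (ideal_gen B) \<subseteq> K"
proof -
  have "B \<subseteq> ideal_quotient K {a}" if "a \<in> A" for a
    unfolding ideal_quotient_def using AB[OF that] by (simp add: subset_iff mult.commute[of _ a])
  then have "ideal_gen B \<subseteq> ideal_quotient K {a}" if "a \<in> A" for a
    using that by (intro ideal_gen_least is_ideal_ideal_quotient K)
  then have "A \<subseteq> ideal_quotient K (ideal_gen B)"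
    unfolding ideal_quotient_def by (simp add: subset_iff mult.commute)
  then have "ideal_gen A \<subseteq> ideal_quotient K (ideal_gen B)"
    by (intro ideal_gen_least is_ideal_ideal_quotient K)
  then have "{f * g | f g. f \<in> ideal_gen A \<and> g \<in> ideal_gen B} \<subseteq> K"
    unfolding ideal_quotient_def by auto
  then show ?thesis
    unfolding ideal_prod_def by (rule ideal_gen_least[OF K])
qed

lemma prime_ideal_one: "prime_ideal P \<Longrightarrow> 1 \<notin> P"
  unfolding prime_ideal_def is_ideal_def by (metis UNIV_eq_I mult.right_neutral)

lemma prime_ideal_power: "prime_ideal P \<Longrightarrow> x ^ n \<in> P \<Longrightarrow> x \<in> P"
  by (induction n) (auto simp: prime_ideal_one prime_ideal_def)

lemma prime_ideal_prod_notin: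
  assumes "prime_ideal P" "finite A" "\<And>x. x \<in> A \<Longrightarrow> f x \<notin> P"
  shows "prod f A \<notin> P"
  using assms(2,3)
  by (induction A rule: finite_induct) (use assms(1) prime_ideal_one in \<open>auto simp: prime_ideal_def\<close>)

lemma radical_subset_prime: "prime_ideal P \<Longrightarrow> Q \<subseteq> P \<Longrightarrow> ideal_radical Q \<subseteq> P"
  unfolding ideal_radical_def using prime_ideal_power by blast

lemma subset_ideal_radical: "I \<subseteq> ideal_radical I"
  unfolding ideal_radical_def by (metis (mono_tags) mem_Collect_eq power_one_right subsetI)

lemma is_ideal_radical:
  assumes Q: "is_ideal Q" shows "is_ideal (ideal_radical Q)"
proof -
  have "x + y \<in> ideal_radical Q" if x: "x ^ m \<in> Q" and y: "y ^ n \<in> Q" for x y m n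
  proof -
    have "of_nat (m + n choose k) * x ^ k * y ^ (m + n - k) \<in> Q" for k
    proof (cases "m \<le> k")
      case True
      then show ?thesis by (intro ideal_mult_right[OF Q] ideal_mult_left[OF Q] ideal_power_mono[OF Q x])
    next
      case False
      then show ?thesis by (intro ideal_mult_left[OF Q] ideal_power_mono[OF Q y]) simp
    qed
    then have "(x + y) ^ (m + n) \<in> Q"
      unfolding binomial_ring by (intro ideal_sum[OF Q])
    then show ?thesis unfolding ideal_radical_def by blast
  qed
  moreover have "(r * x) ^ n \<in> Q" if "x ^ n \<in> Q" for r x n
    using that ideal_mult_left[OF Q] by (simp add: power_mult_distrib)
  ultimately show ?thesis
    using subset_ideal_radical ideal_zero[OF Q] unfolding is_ideal_def ideal_radical_def by blast
qed

lemma radical_primary_prime: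
  assumes "primary_ideal Q" shows "prime_ideal (ideal_radical Q)"
proof -
  have Q: "is_ideal Q" "Q \<noteq> UNIV" and primary: "\<And>a b. a * b \<in> Q \<Longrightarrow> a \<in> Q \<or> (\<exists>n. b ^ n \<in> Q)"
    using assms unfolding primary_ideal_def by blast+
  have "1 \<notin> ideal_radical Q"
    using Q ideal_mult_left[OF Q(1), of 1] unfolding ideal_radical_def by auto
  moreover have "a \<in> ideal_radical Q \<or> b \<in> ideal_radical Q" if "(a * b) ^ n \<in> Q" for a b n
    using primary[of "a ^ n" "b ^ n"] that
    unfolding ideal_radical_def by (auto simp: power_mult_distrib power_mult[symmetric])
  ultimately show ?thesis
    using is_ideal_radical[OF Q(1)] unfolding prime_ideal_def ideal_radical_def by blast
qed

lemma minimal_primeD: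
  assumes "minimal_prime P I"
  shows "prime_ideal P" "\<And>P'. prime_ideal P' \<Longrightarrow> I \<subseteq> P' \<Longrightarrow> P' \<subseteq> P \<Longrightarrow> P' = P"
  using assms unfolding minimal_prime_def by blast+

lemma minimal_primary_decompositionD:
  assumes "minimal_primary_decomposition \<Q> I"
  shows "finite \<Q>" "\<And>Q. Q \<in> \<Q> \<Longrightarrow> primary_ideal Q" "\<Inter>\<Q> = I"
    "\<And>Q1 Q2. Q1 \<in> \<Q> \<Longrightarrow> Q2 \<in> \<Q> \<Longrightarrow> ideal_radical Q1 = ideal_radical Q2 \<Longrightarrow> Q1 = Q2"
  using assms unfolding minimal_primary_decomposition_def by blast+

lemma minimal_primary_decomposition_component_not_subset:
  assumes dec: "minimal_primary_decomposition \<Q> I" and P: "minimal_prime P I"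
    and Q: "Q \<in> \<Q>" "ideal_radical Q = P" and Q': "Q' \<in> \<Q>" "Q' \<noteq> Q"
  shows "\<not> Q' \<subseteq> P"
proof
  assume "Q' \<subseteq> P"
  have "prime_ideal (ideal_radical Q')"
    using minimal_primary_decompositionD(2)[OF dec Q'(1)] by (rule radical_primary_prime)
  moreover have "I \<subseteq> ideal_radical Q'"
    using minimal_primary_decompositionD(3)[OF dec] Q'(1) subset_ideal_radical by blast
  moreover have "ideal_radical Q' \<subseteq> P"
    using minimal_primeD(1)[OF P] \<open>Q' \<subseteq> P\<close> by (rule radical_subset_prime)
  ultimately have "ideal_radical Q' = ideal_radical Q"
    using minimal_primeD(2)[OF P] Q(2) by blast
  then show False
    using minimal_primary_decompositionD(4)[OF dec Q'(1) Q(1)] Q'(2) by blast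
qed

lemma minimal_primary_decomposition_saturating_element:
  assumes dec: "minimal_primary_decomposition \<Q> I" and P: "minimal_prime P I"
    and Q: "Q \<in> \<Q>" "ideal_radical Q = P"
  obtains s where "s \<notin> P" "\<And>g. g \<in> Q \<Longrightarrow> s * g \<in> I"
proof -
  note fin = minimal_primary_decompositionD(1)[OF dec]
    and inter = minimal_primary_decompositionD(3)[OF dec]
  have ideals: "is_ideal Q'" if "Q' \<in> \<Q>" for Q'
    using minimal_primary_decompositionD(2)[OF dec that] unfolding primary_ideal_def by blast
  have "\<exists>x. x \<in> Q' \<and> x \<notin> P" if "Q' \<in> \<Q> - {Q}" for Q'
    using minimal_primary_decomposition_component_not_subset[OF dec P Q, of Q'] that by blast
  then obtain t where t: "\<And>Q'. Q' \<in> \<Q> - {Q} \<Longrightarrow> t Q' \<in> Q' \<and> t Q' \<notin> P"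
    using bchoice[of "\<Q> - {Q}" "\<lambda>Q' x. x \<in> Q' \<and> x \<notin> P"] by blast
  define s where "s = prod t (\<Q> - {Q})"
  have "s \<notin> P"
    unfolding s_def using t by (intro prime_ideal_prod_notin minimal_primeD(1)[OF P]) (simp_all add: fin)
  moreover have "s * g \<in> I" if g: "g \<in> Q" for g
  proof -
    have "s * g \<in> Q'" if "Q' \<in> \<Q>" for Q'
    proof (cases "Q' = Q")
      case True
      then show ?thesis using ideal_mult_left[OF ideals[OF Q(1)] g] by simp
    next
      case False
      with that have Q': "Q' \<in> \<Q> - {Q}" by blast
      then have "s = t Q' * prod t (\<Q> - {Q} - {Q'})"
        unfolding s_def using fin by (simp add: prod.remove)
      with t[OF Q'] show ?thesis
        using ideals[OF that] by (simp add: ideal_mult_right)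
    qed
    then show ?thesis unfolding inter[symmetric] by (rule InterI)
  qed
  ultimately show ?thesis by (rule that)
qed

lemma pdiff_single:
  "pdiff i (Poly_Mapping.single m c) =
     Poly_Mapping.single (m - Poly_Mapping.single i 1) (of_nat (Poly_Mapping.lookup m i) * c)"
  by (cases "c = 0") (simp_all add: pdiff_def)

lemma lookup_pdiff:
  "Poly_Mapping.lookup (pdiff i f) k =
     of_nat (Poly_Mapping.lookup k i + 1) * Poly_Mapping.lookup f (k + Poly_Mapping.single i 1)"
proof -
  let ?e = "Poly_Mapping.single i (1::nat)"
  have shift: "Poly_Mapping.lookup m i = 0" if "m - ?e = k" "m \<noteq> k + ?e" for m
  proof (rule ccontr)
    assume "Poly_Mapping.lookup m i \<noteq> 0"
    then have "m = k + ?e"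
      unfolding that(1)[symmetric]
      by (intro poly_mapping_eqI) (auto simp: lookup_add lookup_minus lookup_single when_def)
    with that(2) show False ..
  qed
  have unshift: "(k + ?e) - ?e = k"
    by (rule poly_mapping_eqI) (simp add: lookup_add lookup_minus lookup_single)
  have "Poly_Mapping.lookup (pdiff i f) k =
      (\<Sum>m\<in>Poly_Mapping.keys f. (of_nat (Poly_Mapping.lookup m i) * Poly_Mapping.lookup f m) when m - ?e = k)"
    by (simp add: pdiff_def lookup_sum lookup_single)
  also have "\<dots> = (\<Sum>m\<in>Poly_Mapping.keys f.
      if m = k + ?e then of_nat (Poly_Mapping.lookup k i + 1) * Poly_Mapping.lookup f (k + ?e) else 0)"
  proof (intro sum.cong refl)
    fix m
    show "((of_nat (Poly_Mapping.lookup m i) * Poly_Mapping.lookup f m) when m - ?e = k) =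
      (if m = k + ?e then of_nat (Poly_Mapping.lookup k i + 1) * Poly_Mapping.lookup f (k + ?e) else 0)"
    proof (cases "m = k + ?e")
      case False
      then show ?thesis using shift[of m] by (auto simp: when_def)
    qed (simp add: when_def unshift lookup_add)
  qed
  also have "\<dots> = of_nat (Poly_Mapping.lookup k i + 1) * Poly_Mapping.lookup f (k + ?e)"
    by (auto simp: in_keys_iff)
  finally show ?thesis .
qed

lemma pdiff_add: "pdiff i (f + g) = pdiff i f + pdiff i g"
  by (rule poly_mapping_eqI) (simp add: lookup_pdiff lookup_add algebra_simps)

lemma pdiff_zero [simp]: "pdiff i 0 = 0"
  by (simp add: pdiff_def)

lemma pdiff_sum: "pdiff i (sum F A) = (\<Sum>x\<in>A. pdiff i (F x))"
  by (induction A rule: infinite_finite_induct) (simp_all add: pdiff_add)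

lemma mpoly_sum_monomials: "f = (\<Sum>m\<in>Poly_Mapping.keys f. Poly_Mapping.single m (Poly_Mapping.lookup f m))"
  by (rule poly_mapping_eqI) (auto simp: lookup_sum lookup_single when_def in_keys_iff)

lemma single_mult_pdiff_single:
  "Poly_Mapping.single m a * pdiff i (Poly_Mapping.single n b :: ('v, 'a::comm_ring_1) mpoly) =
     Poly_Mapping.single (m + n - Poly_Mapping.single i 1) (of_nat (Poly_Mapping.lookup n i) * (a * b))"
proof (cases "Poly_Mapping.lookup n i = 0")
  case False
  then have "m + (n - Poly_Mapping.single i 1) = m + n - Poly_Mapping.single i 1"
    by (intro poly_mapping_eqI) (auto simp: lookup_add lookup_minus lookup_single when_def)
  then show ?thesis by (simp add: pdiff_single mult_single algebra_simps)
qed (simp add: pdiff_single)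

lemma pdiff_mult_monomials:
  "pdiff i (Poly_Mapping.single m a * Poly_Mapping.single n b :: ('v, 'a::comm_ring_1) mpoly) =
     Poly_Mapping.single m a * pdiff i (Poly_Mapping.single n b) +
     Poly_Mapping.single n b * pdiff i (Poly_Mapping.single m a)"
  unfolding single_mult_pdiff_single add.commute[of n m]
  by (simp add: mult_single pdiff_single lookup_add single_add[symmetric] algebra_simps)

lemma pdiff_mult: "pdiff i (f * g :: ('v, 'a::comm_ring_1) mpoly) = f * pdiff i g + g * pdiff i f"
proof -
  define F where "F m = Poly_Mapping.single m (Poly_Mapping.lookup f m)" for m
  define G where "G m = Poly_Mapping.single m (Poly_Mapping.lookup g m)" for m
  \<comment> \<open>Naming the key sets keeps the expansions \<open>f\<close> and \<open>g\<close> below from rewriting themselves.\<close>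
  define Kf where "Kf = Poly_Mapping.keys f"
  define Kg where "Kg = Poly_Mapping.keys g"
  have f: "f = (\<Sum>m\<in>Kf. F m)" and g: "g = (\<Sum>n\<in>Kg. G n)"
    unfolding F_def G_def Kf_def Kg_def by (rule mpoly_sum_monomials)+
  have "pdiff i (f * g) = (\<Sum>m\<in>Kf. \<Sum>n\<in>Kg. pdiff i (F m * G n))"
    by (simp add: f g sum_distrib_left sum_distrib_right pdiff_sum, rule sum.swap)
  also have "\<dots> = (\<Sum>m\<in>Kf. \<Sum>n\<in>Kg. F m * pdiff i (G n) + G n * pdiff i (F m))"
    unfolding F_def G_def by (simp add: pdiff_mult_monomials)
  also have "\<dots> = (\<Sum>m\<in>Kf. \<Sum>n\<in>Kg. F m * pdiff i (G n)) + (\<Sum>m\<in>Kf. \<Sum>n\<in>Kg. G n * pdiff i (F m))"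
    by (simp add: sum.distrib)
  also have "(\<Sum>m\<in>Kf. \<Sum>n\<in>Kg. F m * pdiff i (G n)) = f * pdiff i g"
    by (simp add: f g sum_distrib_left sum_distrib_right pdiff_sum, rule sum.swap)
  also have "(\<Sum>m\<in>Kf. \<Sum>n\<in>Kg. G n * pdiff i (F m)) = g * pdiff i f"
    by (simp add: f g sum_distrib_left sum_distrib_right pdiff_sum)
  finally show ?thesis .
qed

lemma pdiff_mem_deriv_ideal: "f \<in> I \<Longrightarrow> pdiff i f \<in> deriv_ideal I"
  unfolding deriv_ideal_def by (rule subsetD[OF ideal_gen_subset]) blast

lemma strongly_golod_primary_saturation:
  fixes Q :: "('v, 'a::comm_ring_1) mpoly set"
  assumes Q: "primary_ideal Q" and golod: "strongly_golod I" and "I \<subseteq> Q"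
    and s: "s \<notin> ideal_radical Q" and sQ: "\<And>g. g \<in> Q \<Longrightarrow> s * g \<in> I"
  shows "strongly_golod Q"
proof -
  have Qi: "is_ideal Q" using Q unfolding primary_ideal_def by blast
  have derivs: "pdiff i q * pdiff j h \<in> Q" if q: "q \<in> Q" and h: "h \<in> Q" for i j q h
  proof -
    define A where "A = pdiff i (s * q)"
    define B where "B = pdiff j (s * h)"
    have "A \<in> deriv_ideal I" "B \<in> deriv_ideal I"
      unfolding A_def B_def using sQ q h by (simp_all add: pdiff_mem_deriv_ideal)
    then have "A * B \<in> I"
      using golod unfolding strongly_golod_def by (intro subsetD[OF _ ideal_prod_mem])
    have "(pdiff i q * pdiff j h) * (s * s) =
        A * B - (q * (pdiff i s * B) + h * (pdiff j s * A) - q * (h * (pdiff i s * pdiff j s)))"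
      unfolding A_def B_def pdiff_mult by (simp add: algebra_simps)
    also have "\<dots> \<in> Q"
      using \<open>A * B \<in> I\<close> \<open>I \<subseteq> Q\<close> q h
      by (intro ideal_diff[OF Qi] ideal_add[OF Qi]) (auto intro: ideal_mult_right[OF Qi])
    finally have "(pdiff i q * pdiff j h) * (s * s) \<in> Q" .
    moreover have "(s * s) ^ n \<notin> Q" for n
    proof
      assume "(s * s) ^ n \<in> Q"
      then have "s ^ (n + n) \<in> Q" by (simp add: power_mult_distrib power_add)
      with s show False unfolding ideal_radical_def by blast
    qed
    ultimately show ?thesis using Q unfolding primary_ideal_def by blast
  qed
  show ?thesis
    unfolding strongly_golod_def deriv_ideal_def
    by (rule ideal_prod_ideal_gen_subset[OF Qi]) (use derivs in blast)
qed

theorem corollary2p3: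
  fixes a :: "'v::finite \<Rightarrow> nat"
    and I :: "('v, 'k::field_char_0) mpoly set"
  assumes "\<forall>v. a v > 0"
    and "graded_ideal a I"
    and "I \<noteq> UNIV"
    and "strongly_golod I"
    and "minimal_prime P I"
    and "minimal_primary_decomposition \<Q> I"
    and "Q \<in> \<Q>"
    and "ideal_radical Q = P"
  shows "strongly_golod Q"
proof -
  obtain s where "s \<notin> P" "\<And>g. g \<in> Q \<Longrightarrow> s * g \<in> I"
    using minimal_primary_decomposition_saturating_element assms(5-8) by blast
  moreover have "primary_ideal Q" "I \<subseteq> Q"
    using minimal_primary_decompositionD(2,3)[OF assms(6)] assms(7) by blast+
  ultimately show ?thesis
    using strongly_golod_primary_saturation assms(4,8) by blast
qed

end
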